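(* Let $m\ge1$ and let $\pi\in\mathfrak{S}_{3m}$ avoid $132$ and consist only of $3$-cycles. Index its $3$-cycles as having element sets $\{a_i<b_i<c_i\}$, $i=1,\dots,m$, with $b_1<b_2<\dots<b_m$, and let $D_\pi$ be its associated Dyck word. If the indices $j$ and $j+1$ lie in the same free block of $D_\pi$, then the $3$-cycles on $\{a_j,b_j,c_j\}$ and $\{a_{j+1},b_{j+1},c_{j+1}\}$ are of the same form. Furthermore, if these two $3$-cycles are of different forms, then $D_\pi$ has a hit at position $2j$.
   Context: A permutation avoids $132$ if there are no indices $i<j<k$ with $\pi_i<\pi_k<\pi_j$. A $3$-cycle on elements $a<b<c$ has form $(1,2,3)$ if it is $a\mapsto b\mapsto c\mapsto a$, and form $(1,3,2)$ if it is $a\mapsto c\mapsto b\mapsto a$. With $B=\{b_i\}$ and $C=\{c_i\}$, the associated Dyck word $D_\pi$ is the word of length $2m$ obtained by listing the elements of $B\cup C$ in increasing order and writing $0$ for each element of $B$ and $1$ for each element of $C$. For a Dyck word $D$ of semilength $m$ (a word with $m$ zeros and $m$ ones in which every prefix has at least as many zeros as ones): indices $i$ and $i+1$ ($1\le i<m$) are linked if the $i$-th and $(i+1)$-st $0$ of $D$ occupy adjacent positions and the $i$-th and $(i+1)$-st $1$ of $D$ occupy adjacent positions; the free blocks of $D$ are the maximal intervals of $\{1,\dots,m\}$ in which all consecutive indices are linked. $D$ has a hit at position $2j$ ($0\le j\le m$) if its prefix of length $2j$ contains exactly $j$ zeros and $j$ ones. *)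

theory Defs
  imports "HOL-Combinatorics.Permutations"
begin

definition avoids132 :: "nat \<Rightarrow> (nat \<Rightarrow> nat) \<Rightarrow> bool" where
  "avoids132 n \<pi> \<longleftrightarrow>
     \<not> (\<exists>i j k. 1 \<le> i \<and> i < j \<and> j < k \<and> k \<le> n \<and> \<pi> i < \<pi> k \<and> \<pi> k < \<pi> j)"

definition only_3cycles :: "nat \<Rightarrow> (nat \<Rightarrow> nat) \<Rightarrow> bool" where
  "only_3cycles n \<pi> \<longleftrightarrow>
     (\<forall>x\<in>{1..n}. \<pi> x \<noteq> x \<and> \<pi> (\<pi> x) \<noteq> x \<and> \<pi> (\<pi> (\<pi> x)) = x)"

definition cyc :: "(nat \<Rightarrow> nat) \<Rightarrow> nat \<Rightarrow> nat set" where
  "cyc \<pi> x = {x, \<pi> x, \<pi> (\<pi> x)}"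

definition Bset :: "nat \<Rightarrow> (nat \<Rightarrow> nat) \<Rightarrow> nat set" where
  "Bset n \<pi> = {x\<in>{1..n}. Min (cyc \<pi> x) < x \<and> x < Max (cyc \<pi> x)}"

definition Cset :: "nat \<Rightarrow> (nat \<Rightarrow> nat) \<Rightarrow> nat set" where
  "Cset n \<pi> = {x\<in>{1..n}. x = Max (cyc \<pi> x)}"

definition bel :: "nat \<Rightarrow> (nat \<Rightarrow> nat) \<Rightarrow> nat \<Rightarrow> nat" where
  "bel n \<pi> i = sorted_list_of_set (Bset n \<pi>) ! (i - 1)"

datatype cform = Form123 | Form132

text \<open>Form of the 3-cycle on a<b<c through b: (1,2,3) iff a maps to b, else (1,3,2).\<close>
definition cycle_form :: "(nat \<Rightarrow> nat) \<Rightarrow> nat \<Rightarrow> cform" where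
  "cycle_form \<pi> b = (if \<pi> (Min (cyc \<pi> b)) = b then Form123 else Form132)"

definition dyck_word :: "nat \<Rightarrow> (nat \<Rightarrow> nat) \<Rightarrow> nat list" where
  "dyck_word n \<pi> = map (\<lambda>x. if x \<in> Bset n \<pi> then 0 else 1)
                        (sorted_list_of_set (Bset n \<pi> \<union> Cset n \<pi>))"

text \<open>Position (0-based) in D of the i-th (1-based) occurrence of letter v.\<close>
definition occ_pos :: "nat list \<Rightarrow> nat \<Rightarrow> nat \<Rightarrow> nat" where
  "occ_pos D v i = filter (\<lambda>k. D ! k = v) [0..<length D] ! (i - 1)"

definition semilength :: "nat list \<Rightarrow> nat" where
  "semilength D = length D div 2"

definition linked :: "nat list \<Rightarrow> nat \<Rightarrow> bool" where
  "linked D i \<longleftrightarrow> 1 \<le> i \<and> i < semilength D \<and>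
     occ_pos D 0 (Suc i) = Suc (occ_pos D 0 i) \<and>
     occ_pos D 1 (Suc i) = Suc (occ_pos D 1 i)"

definition free_block :: "nat list \<Rightarrow> nat set \<Rightarrow> bool" where
  "free_block D I \<longleftrightarrow> (\<exists>p q. 1 \<le> p \<and> p \<le> q \<and> q \<le> semilength D \<and> I = {p..q} \<and>
     (\<forall>i. p \<le> i \<and> i < q \<longrightarrow> linked D i) \<and>
     \<not> linked D (p - 1) \<and> \<not> linked D q)"

definition has_hit :: "nat list \<Rightarrow> nat \<Rightarrow> bool" where
  "has_hit D pos \<longleftrightarrow> (\<exists>j. pos = 2 * j \<and> j \<le> semilength D \<and>
     count_list (take (2 * j) D) 0 = j \<and> count_list (take (2 * j) D) 1 = j)"

end

theory Submission
  imports Defs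
begin

text \<open>
  If \<open>b < b'\<close> are middle elements of 3-cycles of different forms, avoiding 132 forces the whole
  cycle of \<open>b\<close> to lie below \<open>b'\<close>: otherwise three of the six elements form a 132 pattern.
  When \<open>b\<^sub>j\<close> and \<open>b\<^sub>j\<^sub>+\<^sub>1\<close> have different forms, every earlier \<open>b\<^sub>i\<close> differs in form from one
  of them, so \<open>c\<^sub>1, \<dots>, c\<^sub>j\<close> all lie below \<open>b\<^sub>j\<^sub>+\<^sub>1\<close>, and they are the only elements of \<open>C\<close>
  there. Hence the prefix of length \<open>2j\<close> of \<open>D\<^sub>\<pi>\<close> has \<open>j\<close> zeros and \<open>j\<close> ones, a hit at \<open>2j\<close>;
  and a hit at \<open>2j\<close> separates the \<open>j\<close>-th from the \<open>(j+1)\<close>-st occurrence of each letter, so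
  \<open>j\<close> and \<open>j + 1\<close> are not linked.
\<close>

lemma set_take_sorted_list_of_set:
  fixes S :: "'a::linorder set"
  assumes "finite S" "k < card S"
  shows "set (take k (sorted_list_of_set S)) = {x \<in> S. x < sorted_list_of_set S ! k}"
proof -
  define L where "L = sorted_list_of_set S"
  have sorted: "sorted_wrt (<) L" "sorted L" and len: "k < length L" and set_L: "set L = S"
    using assms by (simp_all add: L_def)
  have "x \<in> set (take k L) \<longleftrightarrow> x \<in> S \<and> x < L ! k" for x
  proof
    assume "x \<in> set (take k L)"
    then obtain i where "i < k" "x = L ! i"
      using len by (auto simp: in_set_conv_nth)
    then show "x \<in> S \<and> x < L ! k"
      using sorted_wrt_nth_less[OF sorted(1)] len set_L by auto
  next
    assume "x \<in> S \<and> x < L ! k"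
    then obtain i where i: "i < length L" "x = L ! i" "L ! i < L ! k"
      using set_L by (auto simp: in_set_conv_nth)
    then have "i < k"
      using sorted_nth_mono[OF sorted(2), of k i] len by (meson leI leD)
    then show "x \<in> set (take k L)"
      using i by (auto simp: in_set_conv_nth)
  qed
  then show ?thesis
    unfolding L_def by blast
qed

lemma card_less_nth_sorted_list_of_set:
  fixes S :: "'a::linorder set"
  assumes "finite S" "k < card S"
  shows "card {x \<in> S. x < sorted_list_of_set S ! k} = k"
proof -
  have "card {x \<in> S. x < sorted_list_of_set S ! k} = card (set (take k (sorted_list_of_set S)))"
    using set_take_sorted_list_of_set[OF assms] by simp
  also have "\<dots> = length (take k (sorted_list_of_set S))"
    by (intro distinct_card) simp
  finally show ?thesis
    using assms(2) by simp
qed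

lemma le_pred_nth_sorted_list_of_set:
  fixes S :: "'a::linorder set"
  assumes "finite S" "k < card S" "x \<in> S" "x < sorted_list_of_set S ! k"
  shows "x \<le> sorted_list_of_set S ! (k - 1)"
proof -
  have "x \<in> set (take k (sorted_list_of_set S))"
    using set_take_sorted_list_of_set[OF assms(1,2)] assms(3,4) by blast
  then obtain i where "i < k" "x = sorted_list_of_set S ! i"
    by (auto simp: in_set_conv_nth)
  then show ?thesis
    using assms(1,2) by (auto intro: sorted_nth_mono)
qed

lemma take_sorted_list_of_set_less:
  fixes S :: "'a::linorder set"
  assumes "finite S"
  shows "take (card {x \<in> S. x < t}) (sorted_list_of_set S) = sorted_list_of_set {x \<in> S. x < t}"
proof -
  have "sorted_list_of_set S = sorted_list_of_set {x \<in> S. x < t} @ sorted_list_of_set {x \<in> S. \<not> x < t}"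
    using assms by (intro strict_sorted_equal) (auto simp: sorted_wrt_append)
  moreover have "length (sorted_list_of_set {x \<in> S. x < t}) = card {x \<in> S. x < t}"
    by simp
  ultimately show ?thesis
    by simp
qed

lemma count_list_map_sorted_list_of_set:
  assumes "finite S"
  shows "count_list (map f (sorted_list_of_set S)) v = card {x \<in> S. f x = v}"
proof -
  have "count_list (map f (sorted_list_of_set S)) v = card ({x. v = f x} \<inter> S)"
    using assms by (simp add: count_list_eq_length_filter filter_map distinct_length_filter comp_def)
  also have "{x. v = f x} \<inter> S = {x \<in> S. f x = v}"
    by auto
  finally show ?thesis .
qed

lemma count_list_take_map_sorted_list_of_set:
  fixes S :: "'a::linorder set"
  assumes "finite S"
  shows "count_list (take (card {x \<in> S. x < t}) (map f (sorted_list_of_set S))) v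
           = card {x \<in> S. x < t \<and> f x = v}"
proof -
  have "take (card {x \<in> S. x < t}) (map f (sorted_list_of_set S))
          = map f (sorted_list_of_set {x \<in> S. x < t})"
    using take_sorted_list_of_set_less[OF assms] by (simp add: take_map)
  then show ?thesis
    using assms by (simp add: count_list_map_sorted_list_of_set conj_assoc)
qed

lemma count_list_take_eq_length_filter_upt:
  "count_list (take k xs) v = length (filter (\<lambda>i. xs ! i = v) [0..<min k (length xs)])"
proof (induction k)
  case (Suc k)
  then show ?case by (cases "k < length xs") (simp_all add: take_Suc_conv_app_nth min_def)
qed simp

lemma count_list_0_plus_count_list_1_le_length:
  "count_list xs (0::nat) + count_list xs 1 \<le> length xs"
  by (induction xs) auto

lemma occ_pos_around_prefix:
  assumes prefix: "count_list (take k D) v = j" and more: "j < count_list D v" and "1 \<le> j"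
  shows "occ_pos D v j < k" "k \<le> occ_pos D v (Suc j)" "D ! occ_pos D v j = v"
proof -
  define P where "P = (\<lambda>i. D ! i = v)"
  have "k < length D"
    using prefix more by (cases "k < length D") auto
  then have "[0..<length D] = [0..<k] @ [k..<length D]"
    using upt_add_eq_append[of 0 k "length D - k"] by simp
  then have split: "filter P [0..<length D] = filter P [0..<k] @ filter P [k..<length D]"
    by simp
  have len_before: "length (filter P [0..<k]) = j"
    using prefix \<open>k < length D\<close> count_list_take_eq_length_filter_upt[of k D v] by (simp add: P_def)
  have "length (filter P [0..<length D]) > j"
    using more count_list_take_eq_length_filter_upt[of "length D" D v] by (simp add: P_def)
  then have after_nonempty: "filter P [k..<length D] \<noteq> []"
    using split len_before by auto
  define last_before where "last_before = filter P [0..<k] ! (j - 1)"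
  define first_after where "first_after = filter P [k..<length D] ! 0"
  have "last_before \<in> set (filter P [0..<k])"
    unfolding last_before_def by (rule nth_mem) (use len_before \<open>1 \<le> j\<close> in simp)
  moreover have "occ_pos D v j = last_before"
    using len_before \<open>1 \<le> j\<close> unfolding occ_pos_def P_def[symmetric] split last_before_def
    by (simp add: nth_append)
  ultimately show "occ_pos D v j < k" "D ! occ_pos D v j = v"
    by (auto simp: P_def)
  have "first_after \<in> set (filter P [k..<length D])"
    unfolding first_after_def by (rule nth_mem) (use after_nonempty in simp)
  moreover have "occ_pos D v (Suc j) = first_after"
    using len_before unfolding occ_pos_def P_def[symmetric] split first_after_def
    by (simp add: nth_append)
  ultimately show "k \<le> occ_pos D v (Suc j)"
    by simp
qed

lemma not_linked_if_balanced_prefix: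
  assumes "count_list (take (2 * j) D) 0 = j" "count_list (take (2 * j) D) 1 = j"
    and "j < count_list D 0" "j < count_list D 1"
  shows "\<not> linked D j"
proof
  assume linked: "linked D j"
  then have "1 \<le> j" by (simp add: linked_def)
  txt \<open>Linking squeezes the \<open>j\<close>-th occurrence of each letter onto position \<open>2j - 1\<close>.\<close>
  have last_letter: "D ! (2 * j - 1) = v"
    if "count_list (take (2 * j) D) v = j" "j < count_list D v"
      and "occ_pos D v (Suc j) = Suc (occ_pos D v j)" for v
  proof -
    note bounds = occ_pos_around_prefix[OF that(1,2) \<open>1 \<le> j\<close>]
    have "occ_pos D v j = 2 * j - 1"
      using bounds(1,2) that(3) by linarith
    then show ?thesis
      using bounds(3) by simp
  qed
  have "D ! (2 * j - 1) = 0" "D ! (2 * j - 1) = 1"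
    using last_letter[of 0] last_letter[of 1] assms linked by (simp_all only: linked_def)
  then show False by simp
qed

lemma has_hit_if_balanced_prefix:
  assumes "count_list (take (2 * j) D) 0 = j" "count_list (take (2 * j) D) 1 = j"
  shows "has_hit D (2 * j)"
proof -
  have "2 * j \<le> length D"
    using count_list_0_plus_count_list_1_le_length[of "take (2 * j) D"] assms by simp
  then show ?thesis
    using assms unfolding has_hit_def semilength_def by auto
qed

lemma linked_if_in_free_block:
  assumes "free_block D I" "j \<in> I" "Suc j \<in> I"
  shows "linked D j"
  using assms unfolding free_block_def by auto

locale three_cycle_132_avoider =
  fixes n :: nat and \<pi> :: "nat \<Rightarrow> nat"
  assumes permutes: "\<pi> permutes {1..n}"
    and three_cycles: "only_3cycles n \<pi>"
    and avoids: "avoids132 n \<pi>"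
begin

abbreviation "B \<equiv> Bset n \<pi>"
abbreviation "C \<equiv> Cset n \<pi>"

lemma orbit:
  assumes "x \<in> {1..n}"
  shows "\<pi> x \<in> {1..n}" "\<pi> (\<pi> (\<pi> x)) = x" "\<pi> x \<noteq> x" "\<pi> (\<pi> x) \<noteq> x" "\<pi> (\<pi> x) \<noteq> \<pi> x"
proof -
  show "\<pi> x \<in> {1..n}"
    using permutes_in_image[OF permutes] assms by blast
  then have "\<pi> (\<pi> x) \<noteq> \<pi> x"
    using three_cycles unfolding only_3cycles_def by blast
  then show "\<pi> (\<pi> (\<pi> x)) = x" "\<pi> x \<noteq> x" "\<pi> (\<pi> x) \<noteq> x" "\<pi> (\<pi> x) \<noteq> \<pi> x"
    using three_cycles assms unfolding only_3cycles_def by auto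
qed

lemma Bset_iff: "x \<in> B \<longleftrightarrow> x \<in> {1..n} \<and> (\<pi> (\<pi> x) < x \<and> x < \<pi> x \<or> \<pi> x < x \<and> x < \<pi> (\<pi> x))"
proof (cases "x \<in> {1..n}")
  case True
  then have "Min (cyc \<pi> x) < x \<and> x < Max (cyc \<pi> x)
               \<longleftrightarrow> \<pi> (\<pi> x) < x \<and> x < \<pi> x \<or> \<pi> x < x \<and> x < \<pi> (\<pi> x)"
    using orbit[OF True] unfolding cyc_def by (auto simp: min_def max_def)
  then show ?thesis
    unfolding Bset_def using True by auto
qed (auto simp: Bset_def)

lemma Cset_iff: "x \<in> C \<longleftrightarrow> x \<in> {1..n} \<and> \<pi> x < x \<and> \<pi> (\<pi> x) < x"
proof (cases "x \<in> {1..n}")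
  case True
  then have "x = Max (cyc \<pi> x) \<longleftrightarrow> \<pi> x < x \<and> \<pi> (\<pi> x) < x"
    using orbit[OF True] unfolding cyc_def by (auto simp: max_def)
  then show ?thesis
    unfolding Cset_def using True by auto
qed (auto simp: Cset_def)

definition Aset :: "nat set" where
  "Aset = {x \<in> {1..n}. x < \<pi> x \<and> x < \<pi> (\<pi> x)}"

lemma cycle_form_eq:
  assumes "b \<in> B"
  shows "cycle_form \<pi> b = (if b < \<pi> b then Form123 else Form132)"
proof -
  have "b \<in> {1..n}"
    using assms by (simp add: Bset_iff)
  then show ?thesis
    using assms orbit[of b] unfolding Bset_iff cycle_form_def cyc_def by (auto simp: min_def)
qed

definition max_other :: "nat \<Rightarrow> nat" where
  "max_other x = max (\<pi> x) (\<pi> (\<pi> x))"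

definition min_other :: "nat \<Rightarrow> nat" where
  "min_other x = min (\<pi> x) (\<pi> (\<pi> x))"

lemma max_other_Bset:
  assumes "b \<in> B"
  shows "max_other b \<in> C" "max_other (max_other b) = b"
proof -
  have b: "b \<in> {1..n}"
    using assms by (simp add: Bset_iff)
  note facts = orbit[OF b] orbit[OF orbit(1)[OF b]] orbit(1)[OF orbit(1)[OF b]]
  show "max_other b \<in> C" "max_other (max_other b) = b"
    using assms facts by (auto simp: Bset_iff Cset_iff max_other_def max_def)
qed

lemma max_other_Cset:
  assumes "c \<in> C"
  shows "max_other c \<in> B" "max_other (max_other c) = c"
proof -
  have c: "c \<in> {1..n}"
    using assms by (simp add: Cset_iff)
  note facts = orbit[OF c] orbit[OF orbit(1)[OF c]] orbit(1)[OF orbit(1)[OF c]]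
  show "max_other c \<in> B" "max_other (max_other c) = c"
    using assms facts by (auto simp: Bset_iff Cset_iff max_other_def max_def)
qed

lemma bij_betw_max_other: "bij_betw max_other B C"
  by (rule bij_betw_byWitness[where f' = max_other]) (auto intro: max_other_Bset max_other_Cset)

lemma min_other_Aset:
  assumes "a \<in> Aset"
  shows "min_other a \<in> B" "min_other (min_other a) = a"
proof -
  have a: "a \<in> {1..n}"
    using assms by (simp add: Aset_def)
  note facts = orbit[OF a] orbit[OF orbit(1)[OF a]] orbit(1)[OF orbit(1)[OF a]]
  show "min_other a \<in> B" "min_other (min_other a) = a"
    using assms facts by (auto simp: Aset_def Bset_iff min_other_def min_def)
qed

lemma min_other_Bset:
  assumes "b \<in> B"
  shows "min_other b \<in> Aset" "min_other (min_other b) = b"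
proof -
  have b: "b \<in> {1..n}"
    using assms by (simp add: Bset_iff)
  note facts = orbit[OF b] orbit[OF orbit(1)[OF b]] orbit(1)[OF orbit(1)[OF b]]
  show "min_other b \<in> Aset" "min_other (min_other b) = b"
    using assms facts by (auto simp: Aset_def Bset_iff min_other_def min_def)
qed

lemma bij_betw_min_other: "bij_betw min_other Aset B"
  by (rule bij_betw_byWitness[where f' = min_other]) (auto intro: min_other_Aset min_other_Bset)

lemma finite_Bset: "finite B" and finite_Cset: "finite C" and Bset_Cset_disjoint: "B \<inter> C = {}"
  by (auto simp: Bset_def Cset_def Bset_iff Cset_iff)

lemma card_Cset: "card C = card B"
  using bij_betw_same_card[OF bij_betw_max_other] by simp

lemma card_Bset: "3 * card B = n"
proof -
  have partition: "{1..n} = Aset \<union> B \<union> C"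
  proof
    show "{1..n} \<subseteq> Aset \<union> B \<union> C"
    proof
      fix x assume x: "x \<in> {1..n}"
      then show "x \<in> Aset \<union> B \<union> C"
        using orbit[OF x] by (auto simp: Aset_def Bset_iff Cset_iff linorder_neq_iff)
    qed
  qed (auto simp: Aset_def Bset_iff Cset_iff)
  have "Aset \<inter> B = {}" "(Aset \<union> B) \<inter> C = {}" "finite Aset"
    by (auto simp: Aset_def Bset_iff Cset_iff)
  then have "card {1..n} = card Aset + card B + card C"
    unfolding partition using finite_Bset finite_Cset by (simp add: card_Un_disjoint)
  moreover have "card Aset = card B"
    using bij_betw_same_card[OF bij_betw_min_other] .
  ultimately show ?thesis
    using card_Cset by simp
qed

lemma less_max_other: "b \<in> B \<Longrightarrow> b < max_other b"
  by (auto simp: Bset_iff max_other_def)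

lemma no_132_pattern: "\<lbrakk>1 \<le> i; i < j; j < k; k \<le> n; \<pi> i < \<pi> k; \<pi> k < \<pi> j\<rbrakk> \<Longrightarrow> False"
  using avoids unfolding avoids132_def by blast

text \<open>Otherwise the positions \<open>a < b < c'\<close> (if \<open>b\<close> has form (1,2,3)) or \<open>b < b' < c\<close>
  (if \<open>b\<close> has form (1,3,2)) would carry a 132 pattern.\<close>
lemma max_other_less_if_forms_differ:
  assumes b: "b \<in> B" and b': "b' \<in> B" and "b < b'"
    and forms: "cycle_form \<pi> b \<noteq> cycle_form \<pi> b'"
  shows "max_other b < b'"
proof -
  have b_range: "b \<in> {1..n}" and b'_range: "b' \<in> {1..n}"
    using b b' by (auto simp: Bset_iff)
  have df: "(b < \<pi> b) \<noteq> (b' < \<pi> b')"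
    using forms cycle_form_eq[OF b] cycle_form_eq[OF b'] by (auto split: if_splits)
  show ?thesis
  proof (cases "b < \<pi> b")
    case True
    then have "\<pi> (\<pi> b) < b" "\<pi> b' < b'" "b' < \<pi> (\<pi> b')"
      using b b' df by (auto simp: Bset_iff)
    moreover have "\<pi> b \<noteq> b'"
      using calculation \<open>b < b'\<close> orbit(2)[OF b_range] by auto
    moreover have "\<not> b' < \<pi> b"
    proof
      assume "b' < \<pi> b"
      then show False
        using no_132_pattern[of "\<pi> (\<pi> b)" b "\<pi> (\<pi> b')"] calculation \<open>b < b'\<close>
          orbit(1,2)[OF b_range] orbit(1,2)[OF b'_range] orbit(1)[OF orbit(1)[OF b'_range]] orbit(1)[OF orbit(1)[OF b_range]]
        by simp
    qed
    ultimately show ?thesis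
      using True by (simp add: max_other_def)
  next
    case False
    then have "\<pi> b < b" "b < \<pi> (\<pi> b)" "b' < \<pi> b'" "\<pi> (\<pi> b') < b'"
      using b b' df by (auto simp: Bset_iff)
    moreover have "\<pi> (\<pi> b) \<noteq> b'"
      using calculation \<open>b < b'\<close> orbit(2)[OF b_range] by auto
    moreover have "\<not> b' < \<pi> (\<pi> b)"
    proof
      assume "b' < \<pi> (\<pi> b)"
      then show False
        using no_132_pattern[of b b' "\<pi> (\<pi> b)"] calculation \<open>b < b'\<close>
          orbit(2)[OF b_range] orbit(1)[OF orbit(1)[OF b_range]] b_range
        by simp
    qed
    ultimately show ?thesis
      by (simp add: max_other_def)
  qed
qed

lemma max_other_less_next:
  assumes "s \<in> B" "t \<in> B" "s < t" "cycle_form \<pi> s \<noteq> cycle_form \<pi> t"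
    and "x \<in> B" "x \<le> s"
  shows "max_other x < t"
proof (cases "cycle_form \<pi> x = cycle_form \<pi> t")
  case True
  then have "x < s"
    using assms(4,6) le_neq_trans by blast
  then show ?thesis
    using max_other_less_if_forms_differ[of x s] True assms by fastforce
next
  case False
  then show ?thesis
    using max_other_less_if_forms_differ[of x t] assms by simp
qed

lemma Cset_less_eq_image:
  assumes "\<forall>x\<in>B. x < t \<longrightarrow> max_other x < t"
  shows "{c \<in> C. c < t} = max_other ` {b \<in> B. b < t}"
proof
  show "max_other ` {b \<in> B. b < t} \<subseteq> {c \<in> C. c < t}"
    using assms max_other_Bset(1) by auto
  show "{c \<in> C. c < t} \<subseteq> max_other ` {b \<in> B. b < t}"
  proof
    fix c assume c: "c \<in> {c \<in> C. c < t}"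
    then have "max_other c \<in> B" "max_other (max_other c) = c"
      using max_other_Cset by auto
    moreover have "max_other c < t"
      using c less_max_other[of "max_other c"] calculation by auto
    ultimately show "c \<in> max_other ` {b \<in> B. b < t}"
      by force
  qed
qed

lemma count_list_dyck_word_prefix:
  shows "count_list (take (card {x \<in> B \<union> C. x < t}) (dyck_word n \<pi>)) 0 = card {x \<in> B. x < t}"
    and "count_list (take (card {x \<in> B \<union> C. x < t}) (dyck_word n \<pi>)) 1 = card {x \<in> C. x < t}"
proof -
  have count: "count_list (take (card {x \<in> B \<union> C. x < t}) (dyck_word n \<pi>)) v
                 = card {x \<in> B \<union> C. x < t \<and> (if x \<in> B then 0 else 1) = v}" for v
    unfolding dyck_word_def using finite_Bset finite_Cset
    by (intro count_list_take_map_sorted_list_of_set) simp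
  have "{x \<in> B \<union> C. x < t \<and> (if x \<in> B then 0 else 1::nat) = 0} = {x \<in> B. x < t}"
    by auto
  moreover have "{x \<in> B \<union> C. x < t \<and> (if x \<in> B then 0 else 1::nat) = 1} = {x \<in> C. x < t}"
    using Bset_Cset_disjoint by auto
  ultimately show "count_list (take (card {x \<in> B \<union> C. x < t}) (dyck_word n \<pi>)) 0 = card {x \<in> B. x < t}"
    and "count_list (take (card {x \<in> B \<union> C. x < t}) (dyck_word n \<pi>)) 1 = card {x \<in> C. x < t}"
    using count by simp_all
qed

lemma count_list_dyck_word: "count_list (dyck_word n \<pi>) 0 = card B" "count_list (dyck_word n \<pi>) 1 = card C"
proof -
  have count: "count_list (dyck_word n \<pi>) v = card {x \<in> B \<union> C. (if x \<in> B then 0 else 1) = v}" for v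
    unfolding dyck_word_def using finite_Bset finite_Cset
    by (intro count_list_map_sorted_list_of_set) simp
  have "{x \<in> B \<union> C. (if x \<in> B then 0 else 1::nat) = 0} = B"
    by auto
  moreover have "{x \<in> B \<union> C. (if x \<in> B then 0 else 1::nat) = 1} = C"
    using Bset_Cset_disjoint by auto
  ultimately show "count_list (dyck_word n \<pi>) 0 = card B" "count_list (dyck_word n \<pi>) 1 = card C"
    using count by simp_all
qed

lemma balanced_prefix_if_forms_differ:
  assumes "1 \<le> j" "j < card B"
    and forms: "cycle_form \<pi> (bel n \<pi> j) \<noteq> cycle_form \<pi> (bel n \<pi> (Suc j))"
  shows "count_list (take (2 * j) (dyck_word n \<pi>)) 0 = j"
    and "count_list (take (2 * j) (dyck_word n \<pi>)) 1 = j"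
proof -
  define s where "s = bel n \<pi> j"
  define t where "t = bel n \<pi> (Suc j)"
  have s_nth: "s = sorted_list_of_set B ! (j - 1)" and t_nth: "t = sorted_list_of_set B ! j"
    by (simp_all add: s_def t_def bel_def)
  have "s \<in> B" "t \<in> B"
    using nth_mem[of j "sorted_list_of_set B"] nth_mem[of "j - 1" "sorted_list_of_set B"]
      assms(2) finite_Bset unfolding s_nth t_nth by auto
  have "s < t"
    using assms(1,2) finite_Bset unfolding s_nth t_nth
    by (intro sorted_wrt_nth_less[where P = "(<)"]) auto
  have B_below: "card {x \<in> B. x < t} = j"
    unfolding t_nth using finite_Bset assms(2) by (rule card_less_nth_sorted_list_of_set)
  have "\<forall>x\<in>B. x < t \<longrightarrow> max_other x < t"
  proof (intro ballI impI)
    fix x assume "x \<in> B" "x < t"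
    then have "x \<le> s"
      unfolding s_nth t_nth using finite_Bset assms(2) le_pred_nth_sorted_list_of_set by blast
    then show "max_other x < t"
      using max_other_less_next \<open>s \<in> B\<close> \<open>t \<in> B\<close> \<open>s < t\<close> forms \<open>x \<in> B\<close>
      unfolding s_def t_def by blast
  qed
  then have "{x \<in> C. x < t} = max_other ` {x \<in> B. x < t}"
    by (rule Cset_less_eq_image)
  moreover have "inj_on max_other {x \<in> B. x < t}"
    using bij_betw_imp_inj_on[OF bij_betw_max_other] by (rule inj_on_subset) auto
  ultimately have C_below: "card {x \<in> C. x < t} = j"
    using B_below by (simp add: card_image)
  have "{x \<in> B \<union> C. x < t} = {x \<in> B. x < t} \<union> {x \<in> C. x < t}"
    by auto
  then have "card {x \<in> B \<union> C. x < t} = 2 * j"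
    using B_below C_below Bset_Cset_disjoint finite_Bset finite_Cset
    by (simp add: card_Un_disjoint disjoint_iff)
  then show "count_list (take (2 * j) (dyck_word n \<pi>)) 0 = j"
    and "count_list (take (2 * j) (dyck_word n \<pi>)) 1 = j"
    using count_list_dyck_word_prefix[of t] B_below C_below by simp_all
qed

end
theorem lemma4p2:
  fixes m :: nat and \<pi> :: "nat \<Rightarrow> nat" and j :: nat
  assumes "m \<ge> 1"
    and "\<pi> permutes {1..3*m}"
    and "avoids132 (3*m) \<pi>"
    and "only_3cycles (3*m) \<pi>"
    and "1 \<le> j" and "j < m"
  shows "((\<exists>I. free_block (dyck_word (3*m) \<pi>) I \<and> j \<in> I \<and> Suc j \<in> I) \<longrightarrow>
            cycle_form \<pi> (bel (3*m) \<pi> j) = cycle_form \<pi> (bel (3*m) \<pi> (Suc j)))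
       \<and> (cycle_form \<pi> (bel (3*m) \<pi> j) \<noteq> cycle_form \<pi> (bel (3*m) \<pi> (Suc j)) \<longrightarrow>
            has_hit (dyck_word (3*m) \<pi>) (2*j))"
proof -
  interpret three_cycle_132_avoider "3 * m" \<pi>
    using assms(2-4) by unfold_locales
  let ?D = "dyck_word (3 * m) \<pi>"
  have "card (Bset (3 * m) \<pi>) = m" "card (Cset (3 * m) \<pi>) = m"
    using card_Bset card_Cset by simp_all
  then have counts: "j < count_list ?D 0" "j < count_list ?D 1"
    using count_list_dyck_word \<open>j < m\<close> by simp_all
  have "has_hit ?D (2 * j) \<and> \<not> linked ?D j"
    if "cycle_form \<pi> (bel (3 * m) \<pi> j) \<noteq> cycle_form \<pi> (bel (3 * m) \<pi> (Suc j))"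
  proof -
    note balanced = balanced_prefix_if_forms_differ[OF \<open>1 \<le> j\<close> _ that]
    show ?thesis
      using has_hit_if_balanced_prefix not_linked_if_balanced_prefix balanced counts
        \<open>card (Bset (3 * m) \<pi>) = m\<close> \<open>j < m\<close> by simp
  qed
  then show ?thesis
    using linked_if_in_free_block by blast
qed

end
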